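(* Let $\mathcal D$ be universal, $\mathrm M=(M,d)\in\mathfrak U_{\mathcal D}$, and $r\in\mathcal D$, $r>0$, with $(r,2r]\cap\mathcal D=\emptyset$. Let $A_0,\dots,A_{n-1}$ be pairwise distinct $\sim_r$-equivalence classes. Then there exist points $a_i\in A_i$ ($i<n$) with $d(a_i,a_j)=d_{\min}(A_i,A_j)$ for all $i,j<n$.
   Context: $\mathcal D$ is a finite subset of $\mathbb R_{\ge0}$ containing $0$. $\mathfrak U_{\mathcal D}$ is the class of countable homogeneous metric spaces (every isometry between finite subspaces extends to an isometry of the space onto itself) with distance set exactly $\mathcal D$ into which every finite metric space with distances in $\mathcal D$ embeds isometrically; $\mathcal D$ is universal if this class is nonempty. $x\sim_r y$ iff $d(x,y)\le r$. For $A,B\subseteq M$, $d_{\min}(A,B)=\min\{d(a,b):a\in A,b\in B\}$. *)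

theory Defs
  imports "HOL-Analysis.Analysis"
begin

definition metric_on :: "'a set \<Rightarrow> ('a \<Rightarrow> 'a \<Rightarrow> real) \<Rightarrow> bool" where
  "metric_on M d \<longleftrightarrow>
     (\<forall>x\<in>M. d x x = 0) \<and>
     (\<forall>x\<in>M. \<forall>y\<in>M. x \<noteq> y \<longrightarrow> d x y > 0) \<and>
     (\<forall>x\<in>M. \<forall>y\<in>M. d x y = d y x) \<and>
     (\<forall>x\<in>M. \<forall>y\<in>M. \<forall>z\<in>M. d x z \<le> d x y + d y z)"

definition dist_set :: "'a set \<Rightarrow> ('a \<Rightarrow> 'a \<Rightarrow> real) \<Rightarrow> real set" where
  "dist_set M d = {d x y | x y. x \<in> M \<and> y \<in> M}"

definition homogeneous_space :: "'a set \<Rightarrow> ('a \<Rightarrow> 'a \<Rightarrow> real) \<Rightarrow> bool" where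
  "homogeneous_space M d \<longleftrightarrow>
     (\<forall>X Y f. finite X \<and> X \<subseteq> M \<and> Y \<subseteq> M \<and> bij_betw f X Y \<and>
        (\<forall>x\<in>X. \<forall>y\<in>X. d (f x) (f y) = d x y) \<longrightarrow>
        (\<exists>g. bij_betw g M M \<and> (\<forall>x\<in>M. \<forall>y\<in>M. d (g x) (g y) = d x y) \<and>
             (\<forall>x\<in>X. g x = f x)))"

text \<open>Every finite metric space with distances in D embeds isometrically into (M,d).
  Finite metric spaces are represented (up to isometry) on carriers {..<k}.\<close>
definition finitely_universal :: "real set \<Rightarrow> 'a set \<Rightarrow> ('a \<Rightarrow> 'a \<Rightarrow> real) \<Rightarrow> bool" where
  "finitely_universal D M d \<longleftrightarrow>
     (\<forall>(k::nat) (e::nat \<Rightarrow> nat \<Rightarrow> real).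
        metric_on {..<k} e \<and> (\<forall>i<k. \<forall>j<k. e i j \<in> D) \<longrightarrow>
        (\<exists>f. (\<forall>i<k. f i \<in> M) \<and> (\<forall>i<k. \<forall>j<k. d (f i) (f j) = e i j)))"

definition in_U :: "real set \<Rightarrow> 'a set \<Rightarrow> ('a \<Rightarrow> 'a \<Rightarrow> real) \<Rightarrow> bool" where
  "in_U D M d \<longleftrightarrow> countable M \<and> metric_on M d \<and> homogeneous_space M d \<and>
     dist_set M d = D \<and> finitely_universal D M d"

text \<open>D is universal: U_D is nonempty (countable spaces may be taken on subsets of nat).\<close>
definition universal_dist_set :: "real set \<Rightarrow> bool" where
  "universal_dist_set D \<longleftrightarrow> (\<exists>(N::nat set) e. in_U D N e)"

definition sim_r :: "('a \<Rightarrow> 'a \<Rightarrow> real) \<Rightarrow> real \<Rightarrow> 'a \<Rightarrow> 'a \<Rightarrow> bool" where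
  "sim_r d r x y \<longleftrightarrow> d x y \<le> r"

definition sim_classes :: "'a set \<Rightarrow> ('a \<Rightarrow> 'a \<Rightarrow> real) \<Rightarrow> real \<Rightarrow> 'a set set" where
  "sim_classes M d r = {{y \<in> M. sim_r d r x y} | x. x \<in> M}"

definition d_min :: "('a \<Rightarrow> 'a \<Rightarrow> real) \<Rightarrow> 'a set \<Rightarrow> 'a set \<Rightarrow> real" where
  "d_min d A B = Min {d a b | a b. a \<in> A \<and> b \<in> B}"

end

theory Submission
  imports Defs
begin

(* Key tool: the one-point extension property of U_D (a point at any admissible
   distances in D from a finite subspace exists), from universality plus
   homogeneity.  Gluing a
   point to witnesses inside a class C puts it in C; hence the minimal distance to
   another class is attained from every point, d_min obeys the triangle inequality
   on classes, and a finite set realizing the minimal distances of its classes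
   extends by a point of any new class (locale universal_gap_space). *)

lemma metric_on_zero: "metric_on M d \<Longrightarrow> x \<in> M \<Longrightarrow> d x x = 0"
  by (simp add: metric_on_def)

lemma metric_on_pos: "metric_on M d \<Longrightarrow> x \<in> M \<Longrightarrow> y \<in> M \<Longrightarrow> x \<noteq> y \<Longrightarrow> 0 < d x y"
  by (simp add: metric_on_def)

lemma metric_on_sym: "metric_on M d \<Longrightarrow> x \<in> M \<Longrightarrow> y \<in> M \<Longrightarrow> d x y = d y x"
  by (simp add: metric_on_def)

lemma metric_on_triangle:
  "metric_on M d \<Longrightarrow> x \<in> M \<Longrightarrow> y \<in> M \<Longrightarrow> z \<in> M \<Longrightarrow> d x z \<le> d x y + d y z"
  unfolding metric_on_def by blast

lemma metric_on_nonneg: "metric_on M d \<Longrightarrow> x \<in> M \<Longrightarrow> y \<in> M \<Longrightarrow> 0 \<le> d x y"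
  using metric_on_triangle[of M d x y x] metric_on_sym[of M d x y] metric_on_zero[of M d x]
  by simp

lemma metric_on_pullback:
  assumes "metric_on M d" and "inj_on s K" and "s ` K \<subseteq> M"
  shows "metric_on K (\<lambda>i j. d (s i) (s j))"
  unfolding metric_on_def
proof (intro conjI ballI impI)
  fix i j assume "i \<in> K" "j \<in> K" "i \<noteq> j"
  then show "0 < d (s i) (s j)"
    using metric_on_pos[OF assms(1)] inj_onD[OF assms(2)] assms(3) by blast
qed (use assms(1,3) in \<open>auto simp: metric_on_def image_subset_iff\<close>)

definition add_point :: "nat \<Rightarrow> (nat \<Rightarrow> nat \<Rightarrow> real) \<Rightarrow> (nat \<Rightarrow> real) \<Rightarrow> nat \<Rightarrow> nat \<Rightarrow> real" where
  "add_point k e h i j =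
     (if i < k \<and> j < k then e i j else if i < k then h i else if j < k then h j else 0)"

lemma metric_on_add_point:
  assumes e: "metric_on {..<k} e"
    and h_pos: "\<And>i. i < k \<Longrightarrow> 0 < h i"
    and h_upper: "\<And>i j. i < k \<Longrightarrow> j < k \<Longrightarrow> e i j \<le> h i + h j"
    and h_lower: "\<And>i j. i < k \<Longrightarrow> j < k \<Longrightarrow> h i \<le> e i j + h j"
  shows "metric_on {..<Suc k} (add_point k e h)"
  unfolding metric_on_def
proof (intro conjI ballI impI)
  fix i j l assume "i \<in> {..<Suc k}" "j \<in> {..<Suc k}" "l \<in> {..<Suc k}"
  then have "i < k \<or> i = k" "j < k \<or> j = k" "l < k \<or> l = k" by auto
  then show "add_point k e h i l \<le> add_point k e h i j + add_point k e h j l"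
    using metric_on_triangle[OF e, of i j l] metric_on_sym[OF e, of l j]
      h_upper[of i l] h_lower[of i j] h_lower[of l j] h_pos[of j]
    by (elim disjE) (simp_all add: add_point_def)
next
  fix i j assume "i \<in> {..<Suc k}" "j \<in> {..<Suc k}"
  then show "add_point k e h i j = add_point k e h j i"
    using metric_on_sym[OF e, of i j] by (simp add: add_point_def)
next
  fix i j assume "i \<in> {..<Suc k}" "j \<in> {..<Suc k}" "i \<noteq> j"
  then show "0 < add_point k e h i j"
    using metric_on_pos[OF e, of i j] h_pos[of i] h_pos[of j] by (auto simp: add_point_def)
qed (use metric_on_zero[OF e] in \<open>simp add: add_point_def\<close>)

lemma in_U_dist_in_D: "in_U D M d \<Longrightarrow> x \<in> M \<Longrightarrow> y \<in> M \<Longrightarrow> d x y \<in> D"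
  unfolding in_U_def dist_set_def by blast

lemma homogeneous_space_transfer:
  assumes "homogeneous_space M d" and "finite X" and "X \<subseteq> M" and "Y \<subseteq> M"
    and "bij_betw \<phi> X Y" and "\<forall>x\<in>X. \<forall>y\<in>X. d (\<phi> x) (\<phi> y) = d x y" and "w \<in> M"
  shows "\<exists>z\<in>M. \<forall>x\<in>X. d z (\<phi> x) = d w x"
proof -
  obtain g where g: "bij_betw g M M" "\<forall>x\<in>M. \<forall>y\<in>M. d (g x) (g y) = d x y" "\<forall>x\<in>X. g x = \<phi> x"
    using assms(1)[unfolded homogeneous_space_def, rule_format, of X Y \<phi>] assms(2-6) by blast
  have "g w \<in> M" using bij_betw_apply[OF g(1) assms(7)] .
  moreover have "d (g w) (\<phi> x) = d w x" if "x \<in> X" for x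
    using g(2,3) that assms(3,7) by (metis subsetD)
  ultimately show ?thesis by blast
qed

lemma homogeneous_copy_transfer:
  assumes hom: "homogeneous_space M d" and metric: "metric_on M d"
    and S: "S \<subseteq> M" and s: "bij_betw s {..<k} S"
    and fM: "\<forall>i<Suc k. f i \<in> M" and f: "\<forall>i<k. \<forall>j<k. d (f i) (f j) = d (s i) (s j)"
  shows "\<exists>z\<in>M. \<forall>i<k. d z (s i) = d (f k) (f i)"
proof -
  have sM: "s i \<in> M" if "i < k" for i using bij_betw_apply[OF s] S that by auto
  have f_inj: "inj_on f {..<k}"
  proof (rule inj_onI, rule ccontr)
    fix i j assume ij: "i \<in> {..<k}" "j \<in> {..<k}" "f i = f j" "i \<noteq> j"
    then have "s i \<noteq> s j" using bij_betw_imp_inj_on[OF s] by (auto simp: inj_on_def)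
    then have "0 < d (s i) (s j)" using metric_on_pos[OF metric] sM ij by simp
    moreover have "d (s i) (s j) = d (s j) (s j)" using f ij by (metis lessThan_iff)
    moreover have "d (s j) (s j) = 0" using metric_on_zero[OF metric] sM ij by simp
    ultimately show False by simp
  qed
  define \<phi> where "\<phi> = s \<circ> inv_into {..<k} f"
  have \<phi>_f: "\<phi> (f i) = s i" if "i < k" for i using f_inj that by (simp add: \<phi>_def)
  have \<phi>_bij: "bij_betw \<phi> (f ` {..<k}) S"
    unfolding \<phi>_def using bij_betw_trans[OF bij_betw_inv_into[OF inj_on_imp_bij_betw[OF f_inj]] s] .
  have \<phi>_iso: "\<forall>x\<in>f ` {..<k}. \<forall>y\<in>f ` {..<k}. d (\<phi> x) (\<phi> y) = d x y"
    using \<phi>_f f by auto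
  have "f ` {..<k} \<subseteq> M" using fM by auto
  then obtain z where "z \<in> M" "\<forall>x\<in>f ` {..<k}. d z (\<phi> x) = d (f k) x"
    using homogeneous_space_transfer[OF hom _ _ S \<phi>_bij \<phi>_iso, of "f k"] fM by auto
  then show ?thesis using \<phi>_f by (intro bexI[of _ z]) auto
qed

(* The
   one-point extension of S is embedded by universality, and homogeneity
   transports the embedded copy of S back onto S itself. *)
lemma in_U_one_point_extension:
  assumes U: "in_U D M d" and zero: "0 \<in> D"
    and S: "finite S" "S \<subseteq> M"
    and h: "\<forall>x\<in>S. h x \<in> D \<and> 0 < h x"
    and h_tri: "\<forall>x\<in>S. \<forall>y\<in>S. d x y \<le> h x + h y \<and> h x \<le> d x y + h y"
  shows "\<exists>z\<in>M. \<forall>x\<in>S. d z x = h x"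
proof -
  have metric: "metric_on M d" and hom: "homogeneous_space M d" using U by (simp_all add: in_U_def)
  obtain k :: nat and s where s: "bij_betw s {..<k} S"
    using ex_bij_betw_nat_finite[OF S(1)] unfolding atLeast0LessThan by blast
  have sS: "s i \<in> S" if "i < k" for i using bij_betw_apply[OF s] that by simp
  define e where "e = add_point k (\<lambda>i j. d (s i) (s j)) (h \<circ> s)"
  have e_metric: "metric_on {..<Suc k} e"
    unfolding e_def
  proof (rule metric_on_add_point)
    show "metric_on {..<k} (\<lambda>i j. d (s i) (s j))"
      using metric_on_pullback[OF metric bij_betw_imp_inj_on[OF s]] bij_betw_imp_surj_on[OF s] S(2)
      by simp
  qed (use h h_tri sS in auto)
  have e_D: "\<forall>i<Suc k. \<forall>j<Suc k. e i j \<in> D"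
    using h sS zero S(2) by (auto simp: e_def add_point_def intro!: in_U_dist_in_D[OF U])
  obtain f where fM: "\<forall>i<Suc k. f i \<in> M" and f: "\<forall>i<Suc k. \<forall>j<Suc k. d (f i) (f j) = e i j"
    using U e_metric e_D unfolding in_U_def finitely_universal_def by blast
  have "\<forall>i<k. \<forall>j<k. d (f i) (f j) = d (s i) (s j)" using f by (simp add: e_def add_point_def)
  then obtain z where z: "z \<in> M" "\<forall>i<k. d z (s i) = d (f k) (f i)"
    using homogeneous_copy_transfer[OF hom metric S(2) s fM] by blast
  have "d z (s i) = h (s i)" if "i < k" for i
    using z(2) f that by (simp add: e_def add_point_def)
  then show ?thesis using z(1) bij_betw_imp_surj_on[OF s] by auto
qed

locale distance_gap =
  fixes M :: "'a set" and d :: "'a \<Rightarrow> 'a \<Rightarrow> real" and r :: real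
  assumes metric: "metric_on M d"
    and r_pos: "0 < r"
    and gap: "\<And>x y. x \<in> M \<Longrightarrow> y \<in> M \<Longrightarrow> d x y \<le> 2 * r \<Longrightarrow> d x y \<le> r"
begin

definition class_of :: "'a \<Rightarrow> 'a set" where
  "class_of x = {y \<in> M. sim_r d r x y}"

lemma sim_classes_eq: "sim_classes M d r = class_of ` M"
  unfolding sim_classes_def class_of_def by blast

lemma class_of_subset: "class_of x \<subseteq> M"
  by (simp add: class_of_def)

lemma class_of_self: "x \<in> M \<Longrightarrow> x \<in> class_of x"
  using metric_on_zero[OF metric] r_pos by (simp add: class_of_def sim_r_def)

(* The gap makes ~_r transitive: a ball is contained in the ball around any of its
   points. *)
lemma class_of_mono:
  assumes "x \<in> M" and "y \<in> class_of x"
  shows "class_of x \<subseteq> class_of y"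
proof
  fix z assume z: "z \<in> class_of x"
  have y: "y \<in> M" "d x y \<le> r" using assms(2) by (auto simp: class_of_def sim_r_def)
  have "d y z \<le> d y x + d x z"
    using metric_on_triangle[OF metric] assms(1) y(1) z class_of_subset by blast
  also have "\<dots> \<le> 2 * r"
    using y z metric_on_sym[OF metric, of x y] assms(1) by (simp add: class_of_def sim_r_def)
  finally show "z \<in> class_of y"
    using gap[of y z] y(1) z by (auto simp: class_of_def sim_r_def)
qed

lemma class_of_eq: "x \<in> M \<Longrightarrow> y \<in> class_of x \<Longrightarrow> class_of y = class_of x"
  using class_of_mono class_of_self class_of_subset by (metis subset_antisym subsetD)

lemma class_eq_class_of: "C \<in> sim_classes M d r \<Longrightarrow> y \<in> C \<Longrightarrow> C = class_of y"
  using class_of_eq by (auto simp: sim_classes_eq)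

lemma class_subset: "C \<in> sim_classes M d r \<Longrightarrow> C \<subseteq> M"
  using class_of_subset by (auto simp: sim_classes_eq)

lemma class_nonempty: "C \<in> sim_classes M d r \<Longrightarrow> C \<noteq> {}"
  using class_of_self by (auto simp: sim_classes_eq)

lemma class_close: "C \<in> sim_classes M d r \<Longrightarrow> u \<in> C \<Longrightarrow> v \<in> C \<Longrightarrow> d u v \<le> r"
  using class_eq_class_of by (fastforce simp: class_of_def sim_r_def)

lemma class_extend:
  "C \<in> sim_classes M d r \<Longrightarrow> u \<in> C \<Longrightarrow> v \<in> M \<Longrightarrow> d u v \<le> r \<Longrightarrow> v \<in> C"
  using class_eq_class_of by (fastforce simp: class_of_def sim_r_def)

lemma classes_far:
  assumes "C \<in> sim_classes M d r" "C' \<in> sim_classes M d r" "C \<noteq> C'" "u \<in> C" "v \<in> C'"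
  shows "r < d u v"
proof (rule ccontr)
  assume "\<not> r < d u v"
  then have "v \<in> C" using class_extend[OF assms(1,4)] class_subset[OF assms(2)] assms(5) by auto
  then show False using class_eq_class_of assms by metis
qed

lemma class_dist_spread:
  assumes "C \<in> sim_classes M d r" "u \<in> M" "q \<in> C" "q' \<in> C"
  shows "d u q' \<le> d u q + r"
  using metric_on_triangle[OF metric, of u q q'] class_close[OF assms(1,3,4)]
    class_subset[OF assms(1)] assms(2-4) by force

end

locale universal_gap_space = distance_gap M d r
  for M :: "'a set" and d :: "'a \<Rightarrow> 'a \<Rightarrow> real" and r :: real +
  fixes D :: "real set"
  assumes in_U: "in_U D M d"
    and finite_D: "finite D" and zero_in_D: "0 \<in> D" and r_in_D: "r \<in> D"
begin

(* Since D is finite, d_min of two nonempty subsets of M is a genuine minimum. *)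
lemma finite_dists: "C \<subseteq> M \<Longrightarrow> C' \<subseteq> M \<Longrightarrow> finite {d a b | a b. a \<in> C \<and> b \<in> C'}"
  by (rule finite_subset[OF _ finite_D]) (auto intro: in_U_dist_in_D[OF in_U])

lemma d_min_le: "C \<subseteq> M \<Longrightarrow> C' \<subseteq> M \<Longrightarrow> a \<in> C \<Longrightarrow> b \<in> C' \<Longrightarrow> d_min d C C' \<le> d a b"
  unfolding d_min_def by (rule Min_le[OF finite_dists]) blast+

lemma d_min_attained:
  assumes "C \<subseteq> M" "C' \<subseteq> M" "C \<noteq> {}" "C' \<noteq> {}"
  shows "\<exists>a\<in>C. \<exists>b\<in>C'. d a b = d_min d C C'"
proof -
  have "d_min d C C' \<in> {d a b | a b. a \<in> C \<and> b \<in> C'}"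
    unfolding d_min_def using assms by (intro Min_in finite_dists) auto
  then show ?thesis by force
qed

lemma d_min_sym: "C \<subseteq> M \<Longrightarrow> C' \<subseteq> M \<Longrightarrow> d_min d C C' = d_min d C' C"
  unfolding d_min_def using metric_on_sym[OF metric] by (metis (no_types, opaque_lifting) subsetD)

lemma d_min_self: "C \<subseteq> M \<Longrightarrow> C \<noteq> {} \<Longrightarrow> d_min d C C = 0"
  using d_min_attained[of C C] d_min_le[of C C] metric_on_zero[OF metric]
    metric_on_nonneg[OF metric] by (metis (no_types, lifting) all_not_in_conv antisym subsetD)

lemma d_min_class_in_D:
  "C \<in> sim_classes M d r \<Longrightarrow> C' \<in> sim_classes M d r \<Longrightarrow> d_min d C C' \<in> D"
  using d_min_attained[OF class_subset class_subset class_nonempty class_nonempty]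
    in_U_dist_in_D[OF in_U] class_subset by (metis subsetD)

lemma d_min_classes_gt:
  "C \<in> sim_classes M d r \<Longrightarrow> C' \<in> sim_classes M d r \<Longrightarrow> C \<noteq> C' \<Longrightarrow> r < d_min d C C'"
  using d_min_attained[OF class_subset class_subset class_nonempty class_nonempty]
    classes_far by metis

(* If every point of P lies at distance between
   t x and t x + r from each x, then some point of C lies at distance exactly t x
   from every x: extend X and P by a point at distance t on X and r on P, which
   then belongs to C. *)
lemma class_point_at_distances:
  assumes C: "C \<in> sim_classes M d r"
    and X: "finite X" "X \<subseteq> M"
    and t: "\<forall>x\<in>X. t x \<in> D \<and> r < t x"
    and t_tri: "\<forall>x\<in>X. \<forall>y\<in>X. d x y \<le> t x + t y \<and> t x \<le> d x y + t y"
    and P: "finite P" "P \<subseteq> C" "P \<noteq> {}"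
    and t_P: "\<forall>x\<in>X. \<forall>p\<in>P. t x \<le> d x p \<and> d x p \<le> t x + r"
  shows "\<exists>z\<in>C. \<forall>x\<in>X. d z x = t x"
proof -
  have PM: "P \<subseteq> M" using P(2) class_subset[OF C] by blast
  have X_P: "x \<notin> P" if "x \<in> X" for x
    using t_P t that r_pos metric_on_zero[OF metric] X(2) by force
  define h where "h y = (if y \<in> P then r else t y)" for y
  have h_X: "h x = t x" if "x \<in> X" for x using X_P that by (simp add: h_def)
  have h_P: "h p = r" if "p \<in> P" for p using that by (simp add: h_def)
  have sym: "d x y = d y x" if "x \<in> X \<union> P" "y \<in> X \<union> P" for x y
    using metric_on_sym[OF metric] that X(2) PM by blast
  have nonneg: "0 \<le> d x y" if "x \<in> X \<union> P" "y \<in> X \<union> P" for x y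
    using metric_on_nonneg[OF metric] that X(2) PM by blast
  have close: "d p q \<le> r" if "p \<in> P" "q \<in> P" for p q
    using class_close[OF C] P(2) that by blast
  obtain z where z: "z \<in> M" "\<forall>y\<in>X \<union> P. d z y = h y"
  proof (rule bexE[OF in_U_one_point_extension[OF in_U zero_in_D, of "X \<union> P" h]])
    show "finite (X \<union> P)" "X \<union> P \<subseteq> M" using X P(1) PM by auto
    show "\<forall>x\<in>X \<union> P. h x \<in> D \<and> 0 < h x"
      using t r_in_D r_pos h_X h_P by auto
    show "\<forall>x\<in>X \<union> P. \<forall>y\<in>X \<union> P. d x y \<le> h x + h y \<and> h x \<le> d x y + h y"
      using t_tri t_P t h_X h_P close sym nonneg r_pos by (smt (verit) Un_iff)
  qed
  obtain p where p: "p \<in> P" using P(3) by blast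
  have "z \<in> C"
    using class_extend[OF C, of p z] p P(2) z sym[of z p] metric_on_sym[OF metric, of z p] PM h_P
    by force
  then show ?thesis using z(2) h_X by (intro bexI[of _ z]) auto
qed

lemma d_min_realized_from:
  assumes C: "C \<in> sim_classes M d r" and C': "C' \<in> sim_classes M d r" and "C \<noteq> C'"
    and v: "v \<in> C"
  shows "\<exists>p\<in>C'. d v p = d_min d C C'"
proof -
  let ?\<delta> = "d_min d C C'"
  have CM: "C \<subseteq> M" "C' \<subseteq> M" using class_subset C C' by auto
  obtain u y where uy: "u \<in> C" "y \<in> C'" "d u y = ?\<delta>"
    using d_min_attained[OF CM class_nonempty[OF C] class_nonempty[OF C']] by blast
  have vM: "v \<in> M" using v CM by blast
  have "d v y \<le> d u y + r"
    using class_dist_spread[OF C, of y u v] metric_on_sym[OF metric] uy v CM by (metis subsetD)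
  moreover have "?\<delta> \<le> d v y" using d_min_le[OF CM v uy(2)] .
  moreover have "r < ?\<delta>" using d_min_classes_gt[OF C C' \<open>C \<noteq> C'\<close>] .
  ultimately obtain z where "z \<in> C'" "d z v = ?\<delta>"
    using class_point_at_distances[OF C', of "{v}" "\<lambda>_. ?\<delta>" "{y}"]
      vM uy d_min_class_in_D[OF C C'] metric_on_zero[OF metric, of v] r_pos
    by auto
  then show ?thesis using metric_on_sym[OF metric, of v z] vM CM by auto
qed

lemma d_min_triangle:
  assumes C1: "C1 \<in> sim_classes M d r" and C2: "C2 \<in> sim_classes M d r"
    and C3: "C3 \<in> sim_classes M d r"
  shows "d_min d C1 C3 \<le> d_min d C1 C2 + d_min d C2 C3"
proof (cases "C1 = C2 \<or> C2 = C3")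
  case True
  then show ?thesis using d_min_self class_subset class_nonempty C1 C2 by auto
next
  case False
  have CM: "C1 \<subseteq> M" "C2 \<subseteq> M" "C3 \<subseteq> M" using class_subset C1 C2 C3 by auto
  obtain u v where uv: "u \<in> C1" "v \<in> C2" "d u v = d_min d C1 C2"
    using d_min_attained[OF CM(1,2) class_nonempty[OF C1] class_nonempty[OF C2]] by blast
  obtain p where p: "p \<in> C3" "d v p = d_min d C2 C3"
    using d_min_realized_from[OF C2 C3 _ uv(2)] False by blast
  have "d_min d C1 C3 \<le> d u p" using d_min_le[OF CM(1,3) uv(1) p(1)] .
  also have "\<dots> \<le> d u v + d v p"
    using metric_on_triangle[OF metric] uv p CM by blast
  finally show ?thesis using uv p by simp
qed

definition realizes_classes :: "'a set \<Rightarrow> bool" where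
  "realizes_classes X \<longleftrightarrow>
     X \<subseteq> M \<and> (\<forall>x\<in>X. \<forall>y\<in>X. d x y = d_min d (class_of x) (class_of y))"

(* Inductive step of the extension: if p and p' in C serve all of X except x0,
   resp. except x1 (with x0 \<noteq> x1), then every x is served exactly by one of them and
   within r by the other, so the gluing step with P = {p, p'} serves all of X. *)
lemma realizing_set_extends_step:
  assumes X: "finite X" "realizes_classes X" and C: "C \<in> sim_classes M d r" and "X \<inter> C = {}"
    and "x0 \<noteq> x1"
    and p: "p \<in> C" "\<forall>x\<in>X - {x0}. d x p = d_min d (class_of x) C"
    and p': "p' \<in> C" "\<forall>x\<in>X - {x1}. d x p' = d_min d (class_of x) C"
  shows "\<exists>q\<in>C. \<forall>x\<in>X. d x q = d_min d (class_of x) C"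
proof -
  let ?t = "\<lambda>x. d_min d (class_of x) C"
  have XM: "X \<subseteq> M" and CM: "C \<subseteq> M"
    using X(2) class_subset[OF C] by (auto simp: realizes_classes_def)
  have cls: "class_of x \<in> sim_classes M d r" if "x \<in> X" for x
    using that XM by (auto simp: sim_classes_eq)
  have cls_ne: "class_of x \<noteq> C" if "x \<in> X" for x
    using that XM class_of_self \<open>X \<inter> C = {}\<close> by blast
  have spread: "d x q \<le> ?t x + r" if "x \<in> X" "q \<in> {p, p'}" for x q
  proof -
    have "\<exists>q0\<in>{p, p'}. d x q0 = ?t x"
      using p(2) p'(2) that(1) \<open>x0 \<noteq> x1\<close> by (cases "x = x0") auto
    then obtain q0 where "q0 \<in> {p, p'}" "d x q0 = ?t x" ..
    then show ?thesis using class_dist_spread[OF C, of x q0 q] that p p' XM by auto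
  qed
  have "\<exists>z\<in>C. \<forall>x\<in>X. d z x = ?t x"
  proof (rule class_point_at_distances[OF C X(1) XM, of ?t "{p, p'}"])
    show "\<forall>x\<in>X. ?t x \<in> D \<and> r < ?t x"
      using d_min_class_in_D[OF cls C] d_min_classes_gt[OF cls C cls_ne] by blast
    show "\<forall>x\<in>X. \<forall>y\<in>X. d x y \<le> ?t x + ?t y \<and> ?t x \<le> d x y + ?t y"
      using X(2) d_min_triangle[OF cls C cls] d_min_triangle[OF cls cls C]
        d_min_sym[OF CM class_of_subset] by (auto simp: realizes_classes_def)
    show "\<forall>x\<in>X. \<forall>q\<in>{p, p'}. ?t x \<le> d x q \<and> d x q \<le> ?t x + r"
      using spread d_min_le[OF class_of_subset CM class_of_self] p p' XM by blast
  qed (use p p' in auto)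
  then show ?thesis using metric_on_sym[OF metric] XM CM by (metis subsetD)
qed

(* By strong induction
   on X; a singleton is handled by d_min_realized_from, larger sets by the step
   above applied to the partners of X - {x0} and X - {x1}. *)
lemma realizing_set_extends:
  assumes "finite X" "realizes_classes X" and C: "C \<in> sim_classes M d r" and "X \<inter> C = {}"
  shows "\<exists>p\<in>C. \<forall>x\<in>X. d x p = d_min d (class_of x) C"
  using assms(1,2,4)
proof (induction X rule: finite_psubset_induct)
  case (psubset X)
  consider "X = {}" | x where "X = {x}" | x0 x1 where "x0 \<in> X" "x1 \<in> X" "x0 \<noteq> x1"
    by blast
  then show ?case
  proof cases
    case 1
    then show ?thesis using class_nonempty[OF C] by auto
  next
    case (2 x)
    then have "x \<in> M" "x \<notin> C" using psubset.prems by (auto simp: realizes_classes_def)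
    then show ?thesis
      using d_min_realized_from[OF _ C _ class_of_self] 2 class_of_self
      by (force simp: sim_classes_eq)
  next
    case (3 x0 x1)
    have sub: "\<exists>p\<in>C. \<forall>x\<in>X - {x}. d x p = d_min d (class_of x) C" if "x \<in> X" for x
      using psubset.IH[of "X - {x}"] psubset.prems that by (auto simp: realizes_classes_def)
    show ?thesis
      using realizing_set_extends_step[OF psubset.hyps psubset.prems(1) C psubset.prems(2) 3(3)]
        sub[OF 3(1)] sub[OF 3(2)] by blast
  qed
qed

lemma realizing_choice_append:
  fixes n :: nat and A :: "nat \<Rightarrow> 'a set"
  assumes A: "\<forall>i\<le>n. A i \<in> sim_classes M d r"
    and a: "\<forall>i<n. a i \<in> A i" "\<forall>i<n. \<forall>j<n. d (a i) (a j) = d_min d (A i) (A j)"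
    and p: "p \<in> A n" "\<forall>i<n. d (a i) p = d_min d (A i) (A n)"
  shows "(\<forall>i<Suc n. (a(n := p)) i \<in> A i) \<and>
    (\<forall>i<Suc n. \<forall>j<Suc n. d ((a(n := p)) i) ((a(n := p)) j) = d_min d (A i) (A j))"
proof (intro conjI allI impI)
  fix i assume "i < Suc n"
  then show "(a(n := p)) i \<in> A i" using a(1) p(1) by (auto simp: less_Suc_eq)
next
  fix i j assume ij: "i < Suc n" "j < Suc n"
  have AM: "A k \<subseteq> M" "A k \<noteq> {}" if "k \<le> n" for k
    using A class_subset class_nonempty that by auto
  have aM: "a k \<in> M" if "k < n" for k using AM(1)[of k] a(1) that by auto
  have pM: "p \<in> M" using AM(1)[of n] p(1) by auto
  consider "i < n" "j < n" | "i < n" "j = n" | "i = n" "j < n" | "i = n" "j = n"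
    using ij less_Suc_eq by blast
  then show "d ((a(n := p)) i) ((a(n := p)) j) = d_min d (A i) (A j)"
    using a(2) p(2) metric_on_sym[OF metric pM aM] d_min_sym[OF AM(1) AM(1)]
      metric_on_zero[OF metric pM] d_min_self[OF AM, of n]
    by cases simp_all
qed

(* Adding the classes one at a time gives the required choice of points: the points
   chosen so far avoid the new class A n, so they extend into it. *)
lemma class_family_realizer:
  fixes n :: nat and A :: "nat \<Rightarrow> 'a set"
  assumes "\<forall>i<n. A i \<in> sim_classes M d r" and "inj_on A {..<n}"
  shows "\<exists>a. (\<forall>i<n. a i \<in> A i) \<and> (\<forall>i<n. \<forall>j<n. d (a i) (a j) = d_min d (A i) (A j))"
  using assms
proof (induction n)
  case 0
  then show ?case by simp
next
  case (Suc n)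
  have A: "A i \<in> sim_classes M d r" if "i \<le> n" for i using Suc.prems(1) that by simp
  obtain a where a: "\<forall>i<n. a i \<in> A i" "\<forall>i<n. \<forall>j<n. d (a i) (a j) = d_min d (A i) (A j)"
    using Suc.IH Suc.prems inj_on_subset[OF Suc.prems(2)] by force
  have A_a: "A i = class_of (a i)" if "i < n" for i
    using class_eq_class_of[OF A] a(1) that by simp
  have disjoint: "a ` {..<n} \<inter> A n = {}"
  proof (rule ccontr)
    assume "a ` {..<n} \<inter> A n \<noteq> {}"
    then obtain i where "i < n" "a i \<in> A n" by blast
    then have "A n = A i" using class_eq_class_of[OF A[of n]] A_a by simp
    then show False using inj_onD[OF Suc.prems(2), of n i] \<open>i < n\<close> by simp
  qed
  have "a i \<in> M" if "i < n" for i using class_subset[OF A[of i]] a(1) that by auto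
  then have "realizes_classes (a ` {..<n})"
    using a(2) A_a by (auto simp: realizes_classes_def)
  then have "\<exists>p\<in>A n. \<forall>x\<in>a ` {..<n}. d x p = d_min d (class_of x) (A n)"
    using realizing_set_extends[OF _ _ A[of n] disjoint] by simp
  then obtain p where "p \<in> A n" "\<forall>i<n. d (a i) p = d_min d (A i) (A n)"
    using A_a by auto
  then show ?case using realizing_choice_append[OF _ a] A by blast
qed

end

lemma universal_gap_spaceI:
  assumes "in_U D M d" and "finite D" and "0 \<in> D" and "r \<in> D" and "0 < r"
    and "{r<..2*r} \<inter> D = {}"
  shows "universal_gap_space M d r D"
proof unfold_locales
  show "d x y \<le> r" if "x \<in> M" "y \<in> M" "d x y \<le> 2 * r" for x y
    using in_U_dist_in_D[OF assms(1) that(1,2)] that(3) assms(6) by (auto simp: not_less[symmetric])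
qed (use assms in \<open>simp_all add: in_U_def\<close>)

theorem lemma3p4:
  fixes D :: "real set" and M :: "'a set" and d :: "'a \<Rightarrow> 'a \<Rightarrow> real"
    and r :: real and n :: nat and A :: "nat \<Rightarrow> 'a set"
  assumes "finite D" and "D \<subseteq> {0..}" and "0 \<in> D"
    and "universal_dist_set D"
    and "in_U D M d"
    and "r \<in> D" and "r > 0" and "{r<..2*r} \<inter> D = {}"
    and "\<forall>i<n. A i \<in> sim_classes M d r"
    and "inj_on A {..<n}"
  shows "\<exists>a. (\<forall>i<n. a i \<in> A i) \<and> (\<forall>i<n. \<forall>j<n. d (a i) (a j) = d_min d (A i) (A j))"
proof -
  interpret universal_gap_space M d r D
    using universal_gap_spaceI assms by blast
  show ?thesis using class_family_realizer assms(9,10) .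
qed

end
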